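(* Let $2\le r\le m\le n$, $k\ge1$, $R=F[t]$ and $M=R^n$. Let $\mathbf u_1,\dots,\mathbf u_m\in M$ have all components polynomials of degree at most $k-1$, written $\mathbf u_j=\sum_{l=0}^{k-1}\mathbf u_j^{(l)}t^l$ with $\mathbf u_j^{(l)}\in F^n$, and let $\overline{\mathbf u_j}$ denote the image of $\mathbf u_j$ in $M/t^kM$. Suppose that $\overline{\mathbf u_{j_1}}\wedge\dots\wedge\overline{\mathbf u_{j_r}}=0$ in $\bigwedge^r(M/t^kM)$ for all $1\le j_1<\dots<j_r\le m$, and that $\mathbf u_1^{(0)}\wedge\dots\wedge\mathbf u_{r-1}^{(0)}\neq0$. Then for all $1\le j_1<\dots<j_r<j_{r+1}\le m$, $$\mathbf u_{j_1}\wedge\dots\wedge\mathbf u_{j_r}\wedge\mathbf u_{j_{r+1}}\in t^{2k}\textstyle\bigwedge^{r+1}M.$$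
   Context: $F$ is an algebraically closed field; wedge products are taken over the relevant ring ($R$ for elements of $M$, $R/(t^k)$ for elements of $M/t^kM$). Here $r+1\le m$ is needed for the conclusion to be nonvacuous. *)

theory Defs
  imports "HOL-Computational_Algebra.Polynomial" "Jordan_Normal_Form.Determinant"
begin

text \<open>Coordinate of the wedge product v_1 ^ ... ^ v_r (vectors in R^n, R a commutative
ring) with respect to the standard basis element e_I (I a subset of the coordinate
indices, |I| = r, listed increasingly) of the free module of r-th exterior power.\<close>
definition wedge_coord :: "'a::comm_ring_1 vec list \<Rightarrow> nat set \<Rightarrow> 'a" where
  "wedge_coord vs I =
     det (mat (length vs) (length vs) (\<lambda>(i, j). vs ! j $ (sorted_list_of_set I ! i)))"

definition wedge_nonzero :: "nat \<Rightarrow> 'a::comm_ring_1 vec list \<Rightarrow> bool" where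
  "wedge_nonzero n vs \<longleftrightarrow>
     (\<exists>I. I \<subseteq> {0..<n} \<and> card I = length vs \<and> wedge_coord vs I \<noteq> 0)"

text \<open>The wedge product of vs (vectors in F[t]^n) lies in t^e times the exterior power.
For e = k this is exactly the vanishing of the wedge of the images in
the exterior power of (F[t]/(t^k))^n.\<close>
definition wedge_in_tpow :: "nat \<Rightarrow> nat \<Rightarrow> 'a::field poly vec list \<Rightarrow> bool" where
  "wedge_in_tpow n e vs \<longleftrightarrow>
     (\<forall>I. I \<subseteq> {0..<n} \<and> card I = length vs \<longrightarrow> [:0, 1:] ^ e dvd wedge_coord vs I)"

end

theory Submission
  imports Defs "HOL-Computational_Algebra.Polynomial_Factorial"
begin

(* Choose rows I0 on which the minor D of u_1, ..., u_(r-1) has nonzero constant term, so that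
   D is prime to t. Given r + 1 of the vectors and r + 1 rows I, let X be their minor matrix on I,
   A the matrix of D, U the rows I of u_1, ..., u_(r-1) and Y the rows I0 of the r + 1 vectors.
   Then [X U; 0 A] * [D 1, 0; -adj(A) Y, 1] has upper left block the Schur complement
   D X - U adj(A) Y, whose entries are bordered r-minors of u_1, ..., u_(r-1), u_j and hence
   divisible by t^k. An (r+1) x (r+1) block of a 2r x 2r matrix that is divisible by t^k forces
   t^(2k) to divide the determinant D^(r+2) det X, and D can be cancelled. *)

lemma card_insert_index_preimage:
  assumes "S \<subseteq> {0..<Suc N}" and "i \<le> N"
  shows "card {i'. i' < N \<and> insert_index i i' \<in> S} + (if i \<in> S then 1 else 0) = card S"
proof -
  have "bij_betw (insert_index i) {i'. i' < N \<and> insert_index i i' \<in> S} (S - {i})"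
  proof (rule bij_betw_byWitness[where f' = "delete_index i"])
    show "insert_index i ` {i'. i' < N \<and> insert_index i i' \<in> S} \<subseteq> S - {i}"
      by (auto simp: insert_index_def)
    show "delete_index i ` (S - {i}) \<subseteq> {i'. i' < N \<and> insert_index i i' \<in> S}"
      using assms by (auto simp: insert_delete_index) (auto simp: delete_index_def)
  qed (auto simp: insert_delete_index)
  moreover have "finite S"
    using assms(1) finite_subset by blast
  ultimately show ?thesis
    using card_Suc_Diff1[of S i] by (simp add: bij_betw_same_card)
qed

lemma power_dvd_det_if_submatrix_dvd:
  fixes A :: "'a::comm_ring_1 mat"
  assumes "A \<in> carrier_mat N N" and "B \<subseteq> {0..<N}" and "C \<subseteq> {0..<N}"
    and "\<And>i j. i \<in> B \<Longrightarrow> j \<in> C \<Longrightarrow> x dvd A $$ (i, j)"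
    and "N + e \<le> card B + card C"
  shows "x ^ e dvd det A"
  \<comment> \<open>Laplace expansion along a column j in C: the minor at (i, j) still contains the
    block (B - {i}) x (C - {j}), and when i is in B the entry at (i, j) makes up for the
    lost power of x.\<close>
  using assms
proof (induction N arbitrary: A B C e)
  case 0
  then show ?case by simp
next
  case (Suc N)
  show ?case
  proof (cases e)
    case 0
    then show ?thesis by simp
  next
    case e: (Suc e')
    have "card B \<le> Suc N"
      using card_mono[OF _ Suc.prems(2)] by simp
    then obtain j where j: "j \<in> C"
      using Suc.prems(5) e by fastforce
    with Suc.prems(3) have jN: "j < Suc N" by auto
    define C' where "C' = {j'. j' < N \<and> insert_index j j' \<in> C}"
    have card_C': "card C' + 1 = card C"
      using card_insert_index_preimage[OF Suc.prems(3), of j] j jN by (simp add: C'_def)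
    have "x ^ e dvd A $$ (i, j) * cofactor A i j" if "i \<in> {..<Suc N}" for i
    proof -
      from that have iN: "i < Suc N" by simp
      define B' where "B' = {i'. i' < N \<and> insert_index i i' \<in> B}"
      have card_B': "card B' + (if i \<in> B then 1 else 0) = card B"
        using card_insert_index_preimage[OF Suc.prems(2), of i] iN by (simp add: B'_def)
      have dvd_minor: "x dvd mat_delete A i j $$ (i', j')" if "i' \<in> B'" and "j' \<in> C'" for i' j'
        using that Suc.prems(4) mat_delete_index[OF Suc.prems(1) iN jN, of i' j', symmetric]
        by (auto simp: B'_def C'_def)
      have sub: "B' \<subseteq> {0..<N}" "C' \<subseteq> {0..<N}"
        by (auto simp: B'_def C'_def)
      have IH: "x ^ e'' dvd det (mat_delete A i j)" if "N + e'' \<le> card B' + card C'" for e''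
        using Suc.IH[OF _ sub dvd_minor that] mat_delete_carrier[OF Suc.prems(1), of i j] by simp
      show ?thesis
      proof (cases "i \<in> B")
        case True
        then have "x ^ e' dvd det (mat_delete A i j)"
          using IH card_B' card_C' Suc.prems(5) e by simp
        moreover have "x dvd A $$ (i, j)"
          using Suc.prems(4) True j by blast
        ultimately show ?thesis
          unfolding cofactor_def e by (simp add: mult_dvd_mono)
      next
        case False
        then have "x ^ e dvd det (mat_delete A i j)"
          using IH card_B' card_C' Suc.prems(5) by simp
        then show ?thesis
          unfolding cofactor_def by simp
      qed
    qed
    then show ?thesis
      unfolding laplace_expansion_column[OF Suc.prems(1) jN] by (rule dvd_sum)
  qed
qed

lemma det_bordered_mat:
  fixes A :: "'a::idom mat"
  assumes A: "A \<in> carrier_mat q q" and b: "b \<in> carrier_mat q 1"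
    and c: "c \<in> carrier_mat 1 q" and d: "d \<in> carrier_mat 1 1" and "det A \<noteq> 0"
  shows "det (four_block_mat A b c d) = (det A \<cdot>\<^sub>m d - c * (adj_mat A * b)) $$ (0, 0)"
proof -
  have adj: "adj_mat A \<in> carrier_mat q q" "A * adj_mat A = det A \<cdot>\<^sub>m 1\<^sub>m q"
    using adj_mat[OF A] by auto
  define b' where "b' = adj_mat A * b"
  have b': "b' \<in> carrier_mat q 1"
    using adj b by (simp add: b'_def)
  define W where "W = det A \<cdot>\<^sub>m d - c * b'"
  have W: "W \<in> carrier_mat 1 1"
    unfolding W_def using d c b' by (intro minus_carrier_mat) auto
  define K where "K = four_block_mat (1\<^sub>m q) (- b') (0\<^sub>m 1 q) (det A \<cdot>\<^sub>m 1\<^sub>m 1)"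
  have K: "K \<in> carrier_mat (q + 1) (q + 1)"
    unfolding K_def by (rule four_block_carrier_mat) simp_all
  have "A * b' = det A \<cdot>\<^sub>m b"
    using adj b
    by (simp add: b'_def assoc_mult_mat[OF A adj(1) b, symmetric]
        mult_smult_assoc_mat[OF one_carrier_mat b])
  then have upper_right: "A * - b' + b * (det A \<cdot>\<^sub>m 1\<^sub>m 1) = 0\<^sub>m q 1"
    using A b b' by (intro eq_matI) auto
  have lower_right: "c * - b' + d * (det A \<cdot>\<^sub>m 1\<^sub>m 1) = W"
    using c d b' by (intro eq_matI) (auto simp: W_def)
  have "four_block_mat A b c d * K =
      four_block_mat (A * 1\<^sub>m q + b * 0\<^sub>m 1 q) (A * - b' + b * (det A \<cdot>\<^sub>m 1\<^sub>m 1))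
        (c * 1\<^sub>m q + d * 0\<^sub>m 1 q) (c * - b' + d * (det A \<cdot>\<^sub>m 1\<^sub>m 1))"
    unfolding K_def using b' by (intro mult_four_block_mat[OF A b c d]) auto
  also have "\<dots> = four_block_mat A (0\<^sub>m q 1) c W"
    using A b c d by (intro cong_four_block_mat upper_right lower_right) auto
  finally have "det (four_block_mat A b c d * K) = det (four_block_mat A (0\<^sub>m q 1) c W)"
    by (rule arg_cong)
  then have "det (four_block_mat A b c d) * det K = det A * W $$ (0, 0)"
    using det_mult[OF four_block_carrier_mat[OF A d] K] A c W
    by (simp add: det_four_block_mat_upper_right_zero det_single)
  moreover have "det K = det A"
    unfolding K_def using b' by (subst det_four_block_mat_lower_left_zero[of _ q _ 1]) auto
  ultimately show ?thesis
    using \<open>det A \<noteq> 0\<close> by (simp add: W_def b'_def)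
qed

lemma power_dvd_det_mult_if_schur_complement_dvd:
  fixes A :: "'a::idom mat"
  assumes X: "X \<in> carrier_mat p p" and U: "U \<in> carrier_mat p q"
    and A: "A \<in> carrier_mat q q" and Y: "Y \<in> carrier_mat q p"
    and dvd: "\<And>a c. a < p \<Longrightarrow> c < p \<Longrightarrow>
      x dvd (det A \<cdot>\<^sub>m X - U * (adj_mat A * Y)) $$ (a, c)"
  shows "x ^ (p - q) dvd det X * det A ^ Suc p"
proof (cases "q \<le> p")
  case False
  then show ?thesis by simp
next
  case True
  have adj: "adj_mat A \<in> carrier_mat q q"
    using adj_mat[OF A] by auto
  define T where "T = four_block_mat X U (0\<^sub>m q p) A"
  define K where "K = four_block_mat (det A \<cdot>\<^sub>m 1\<^sub>m p) (0\<^sub>m p q) (- (adj_mat A * Y)) (1\<^sub>m q)"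
  have T: "T \<in> carrier_mat (p + q) (p + q)"
    using X A by (simp add: T_def)
  have K: "K \<in> carrier_mat (p + q) (p + q)"
    unfolding K_def by (rule four_block_carrier_mat) simp_all
  have "(T * K) $$ (a, c) = (det A \<cdot>\<^sub>m X - U * (adj_mat A * Y)) $$ (a, c)"
    if "a < p" and "c < p" for a c
  proof -
    have "T * K = four_block_mat (X * (det A \<cdot>\<^sub>m 1\<^sub>m p) + U * - (adj_mat A * Y))
        (X * 0\<^sub>m p q + U * 1\<^sub>m q) (0\<^sub>m q p * (det A \<cdot>\<^sub>m 1\<^sub>m p) + A * - (adj_mat A * Y))
        (0\<^sub>m q p * 0\<^sub>m p q + A * 1\<^sub>m q)"
      unfolding T_def K_def using adj Y by (intro mult_four_block_mat[OF X U _ A]) auto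
    then show ?thesis
      using that X U adj Y
      by (simp add: mult_smult_distrib[OF X one_carrier_mat])
  qed
  then have "x ^ (p - q) dvd det (T * K)"
    using T K dvd True
    by (intro power_dvd_det_if_submatrix_dvd[of _ "p + q" "{0..<p}" "{0..<p}"]) auto
  moreover have "det T = det X * det A"
    unfolding T_def by (rule det_four_block_mat_lower_left_zero[OF X U refl A])
  moreover have "det K = det A ^ p"
    unfolding K_def using adj Y by (subst det_four_block_mat_upper_right_zero[of _ p _ q]) auto
  ultimately show ?thesis
    by (simp add: det_mult[OF T K] mult.assoc)
qed

lemma schur_complement_entry_eq_det_bordered:
  fixes A :: "'a::idom mat"
  assumes X: "X \<in> carrier_mat p p" and U: "U \<in> carrier_mat p q"
    and A: "A \<in> carrier_mat q q" and Y: "Y \<in> carrier_mat q p"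
    and "det A \<noteq> 0" and "a < p" and "c < p"
  shows "(det A \<cdot>\<^sub>m X - U * (adj_mat A * Y)) $$ (a, c) =
    det (four_block_mat A (mat q 1 (\<lambda>(b, _). Y $$ (b, c))) (mat 1 q (\<lambda>(_, b). U $$ (a, b)))
      (mat 1 1 (\<lambda>_. X $$ (a, c))))"
proof -
  have adj: "adj_mat A \<in> carrier_mat q q"
    using adj_mat[OF A] by simp
  have "(det A \<cdot>\<^sub>m X - U * (adj_mat A * Y)) $$ (a, c) =
      (det A \<cdot>\<^sub>m mat 1 1 (\<lambda>_. X $$ (a, c)) - mat 1 q (\<lambda>(_, b). U $$ (a, b)) *
        (adj_mat A * mat q 1 (\<lambda>(b, _). Y $$ (b, c)))) $$ (0, 0)"
    using assms adj by (simp add: scalar_prod_def row_def col_def)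
  also have "\<dots> = det (four_block_mat A (mat q 1 (\<lambda>(b, _). Y $$ (b, c)))
      (mat 1 q (\<lambda>(_, b). U $$ (a, b))) (mat 1 1 (\<lambda>_. X $$ (a, c))))"
    using A \<open>det A \<noteq> 0\<close> by (intro det_bordered_mat[symmetric]) auto
  finally show ?thesis .
qed

lemma bij_betw_nth_sorted_list_of_set:
  assumes "finite I"
  shows "bij_betw ((!) (sorted_list_of_set I)) {0..<card I} I"
  by (rule bij_betw_nth) (simp_all add: assms atLeast0LessThan)

lemma wedge_coord_eq_0_if_not_distinct:
  assumes "\<not> distinct vs"
  shows "wedge_coord vs I = 0"
proof -
  obtain j j' where "j < length vs" "j' < length vs" "j \<noteq> j'" "vs ! j = vs ! j'"
    using assms by (auto simp: distinct_conv_nth)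
  then show ?thesis
    unfolding wedge_coord_def
    by (intro det_identical_columns[of _ "length vs" j j']) (auto intro!: eq_vecI)
qed

lemma wedge_coord_map_vec:
  assumes "comm_ring_hom h" and "\<And>v. v \<in> set vs \<Longrightarrow> dim_vec v = n"
    and "I \<subseteq> {0..<n}" and "card I = length vs"
  shows "wedge_coord (map (map_vec h) vs) I = h (wedge_coord vs I)"
proof -
  interpret comm_ring_hom h by fact
  have "sorted_list_of_set I ! i < n" if "i < length vs" for i
  proof -
    have "finite I" using assms(3) finite_subset by blast
    then have "sorted_list_of_set I ! i \<in> I"
      using bij_betw_apply[OF bij_betw_nth_sorted_list_of_set, of I i] that assms(4) by simp
    then show ?thesis using assms(3) by auto
  qed
  then show ?thesis
    unfolding wedge_coord_def hom_det[symmetric] using assms(2)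
    by (intro arg_cong[of _ _ det] eq_matI) auto
qed

lemma dvd_det_rows_if_dvd_wedge_coord:
  assumes "inj_on f {0..<length vs} \<Longrightarrow> x dvd wedge_coord vs (f ` {0..<length vs})"
  shows "x dvd det (mat (length vs) (length vs) (\<lambda>(a, b). vs ! b $ f a))"
proof (cases "inj_on f {0..<length vs}")
  case False
  then obtain a a' where "a < length vs" "a' < length vs" "a \<noteq> a'" "f a = f a'"
    by (auto simp: inj_on_def)
  then have "det (mat (length vs) (length vs) (\<lambda>(a, b). vs ! b $ f a)) = 0"
    by (intro det_identical_rows[of _ "length vs" a a']) (auto intro!: eq_vecI)
  then show ?thesis by simp
next
  case True
  define N where "N = length vs"
  define S where "S = f ` {0..<N}"
  define L where "L = sorted_list_of_set S"
  have "finite S" and "card S = N"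
    using card_image[OF True] by (simp_all add: S_def N_def)
  then have L: "bij_betw ((!) L) {0..<N} S"
    using bij_betw_nth_sorted_list_of_set[of S] by (simp add: L_def)
  define p where "p a = (if a < N then the_inv_into {0..<N} ((!) L) (f a) else a)" for a
  have "bij_betw (the_inv_into {0..<N} ((!) L) \<circ> f) {0..<N} {0..<N}"
    using True bij_betw_the_inv_into[OF L]
    by (intro bij_betw_trans[of f _ S]) (auto simp: bij_betw_def S_def N_def)
  then have "bij_betw p {0..<N} {0..<N}"
    by (rule bij_betw_cong[THEN iffD1, rotated]) (auto simp: p_def)
  then have p: "p permutes {0..<N}"
    by (rule bij_imp_permutes) (auto simp: p_def)
  have Lp: "L ! p a = f a" if "a < N" for a
    using that f_the_inv_into_f_bij_betw[OF L, of "f a"] by (auto simp: p_def S_def)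
  define W where "W = mat N N (\<lambda>(a, b). vs ! b $ (L ! a))"
  have "det W = wedge_coord vs S"
    by (simp add: W_def wedge_coord_def L_def N_def)
  moreover have "mat N N (\<lambda>(a, b). vs ! b $ f a) = mat N N (\<lambda>(a, b). W $$ (p a, b))"
    using Lp permutes_in_image[OF p]
    by (intro eq_matI) (auto simp: W_def)
  ultimately have "det (mat N N (\<lambda>(a, b). vs ! b $ f a)) = signof p * wedge_coord vs S"
    using det_permute_rows[of W N p] p by (simp add: W_def)
  then show ?thesis
    using True assms by (simp add: N_def S_def)
qed

lemma power_dvd_wedge_coord_if_bordered_dvd:
  fixes us vs :: "'a::idom vec list"
  assumes I0: "finite I0" "card I0 = length us" and D: "wedge_coord us I0 \<noteq> 0"
    and I: "finite I" "card I = length vs"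
    and bordered: "\<And>v i. v \<in> set vs \<Longrightarrow> i \<in> I \<Longrightarrow> i \<notin> I0 \<Longrightarrow>
      x dvd wedge_coord (us @ [v]) (insert i I0)"
  shows "x ^ (length vs - length us) dvd wedge_coord us I0 ^ Suc (length vs) * wedge_coord vs I"
proof -
  define q p where "q = length us" and "p = length vs"
  define \<rho>0 \<rho> where "\<rho>0 = (!) (sorted_list_of_set I0)" and "\<rho> = (!) (sorted_list_of_set I)"
  have \<rho>0: "bij_betw \<rho>0 {0..<q} I0" and \<rho>: "bij_betw \<rho> {0..<p} I"
    using bij_betw_nth_sorted_list_of_set[OF I0(1)] bij_betw_nth_sorted_list_of_set[OF I(1)]
      I0(2) I(2)
    by (simp_all add: \<rho>0_def \<rho>_def q_def p_def)
  define A where "A = mat q q (\<lambda>(a, b). us ! b $ \<rho>0 a)"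
  define X where "X = mat p p (\<lambda>(a, c). vs ! c $ \<rho> a)"
  define U where "U = mat p q (\<lambda>(a, b). us ! b $ \<rho> a)"
  define Y where "Y = mat q p (\<lambda>(a, c). vs ! c $ \<rho>0 a)"
  have A: "A \<in> carrier_mat q q" and detA: "det A = wedge_coord us I0"
    by (simp_all add: A_def wedge_coord_def q_def \<rho>0_def)
  have X: "X \<in> carrier_mat p p" and detX: "det X = wedge_coord vs I"
    by (simp_all add: X_def wedge_coord_def p_def \<rho>_def)
  have "x dvd (det A \<cdot>\<^sub>m X - U * (adj_mat A * Y)) $$ (a, c)" if "a < p" and "c < p" for a c
  proof -
    define ws where "ws = us @ [vs ! c]"
    define f where "f a' = (if a' < q then \<rho>0 a' else \<rho> a)" for a'
    have "(det A \<cdot>\<^sub>m X - U * (adj_mat A * Y)) $$ (a, c) =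
        det (four_block_mat A (mat q 1 (\<lambda>(b, _). Y $$ (b, c))) (mat 1 q (\<lambda>(_, b). U $$ (a, b)))
          (mat 1 1 (\<lambda>_. X $$ (a, c))))"
      using that D detA
      by (intro schur_complement_entry_eq_det_bordered) (auto simp: A_def X_def U_def Y_def)
    also have "four_block_mat A (mat q 1 (\<lambda>(b, _). Y $$ (b, c))) (mat 1 q (\<lambda>(_, b). U $$ (a, b)))
        (mat 1 1 (\<lambda>_. X $$ (a, c))) = mat (length ws) (length ws) (\<lambda>(a', b). ws ! b $ f a')"
      using that
      by (intro eq_matI) (auto simp: A_def X_def U_def Y_def ws_def f_def nth_append q_def)
    also have "x dvd det \<dots>"
    proof (rule dvd_det_rows_if_dvd_wedge_coord)
      have "f ` {0..<length ws} = insert (f q) (f ` {0..<q})"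
        by (simp add: ws_def q_def atLeast0_lessThan_Suc)
      also have "f ` {0..<q} = \<rho>0 ` {0..<q}"
        by (rule image_cong) (simp_all add: f_def)
      finally have image: "f ` {0..<length ws} = insert (\<rho> a) I0"
        using bij_betw_imp_surj_on[OF \<rho>0] by (simp add: f_def)
      assume inj: "inj_on f {0..<length ws}"
      have "card (insert (\<rho> a) I0) = Suc q"
        using card_image[OF inj, unfolded image] by (simp add: ws_def q_def)
      then have "\<rho> a \<notin> I0"
        using I0(2) by (auto simp: q_def insert_absorb)
      then show "x dvd wedge_coord ws (f ` {0..<length ws})"
        unfolding image unfolding ws_def using that I(2) bij_betw_apply[OF \<rho>]
        by (intro bordered) (auto simp: p_def)
    qed
    finally show ?thesis .
  qed
  then have "x ^ (p - q) dvd det X * det A ^ Suc p"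
    using X A
    by (intro power_dvd_det_mult_if_schur_complement_dvd[of X p U q A Y]) (auto simp: U_def Y_def)
  then show ?thesis
    by (simp add: detA detX p_def q_def mult.commute)
qed

lemma linear_power_dvd_mult_cancel:
  fixes D y :: "'a::field poly"
  assumes "[:c, 1:] ^ N dvd D * y" and "poly D (- c) \<noteq> 0"
  shows "[:c, 1:] ^ N dvd y"
proof (cases N)
  case 0
  then show ?thesis by simp
next
  case (Suc N')
  have "\<not> [:c, 1:] dvd D"
    using assms(2) by (simp add: dvd_iff_poly_eq_0)
  then show ?thesis
    using prime_power_dvd_multD[OF prime_elem_linear_field_poly assms(1)] Suc by simp
qed

lemma bordered_wedge_coord_dvd:
  fixes u :: "nat \<Rightarrow> 'a::field poly vec"
  assumes vanish: "\<And>js. sorted_wrt (<) js \<Longrightarrow> set js \<subseteq> {1..m} \<Longrightarrow> length js = r \<Longrightarrow>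
      wedge_in_tpow n k (map u js)"
    and "1 \<le> r" and "v \<in> u ` {1..m}"
    and "i < n" and "I0 \<subseteq> {0..<n}" and "card I0 = r - 1" and "i \<notin> I0"
  shows "[:0, 1:] ^ k dvd wedge_coord (map u [1..<r] @ [v]) (insert i I0)"
proof -
  obtain j where j: "j \<in> {1..m}" and v: "v = u j"
    using assms(3) by blast
  show ?thesis
  proof (cases "j < r")
    case True
    then have "\<not> distinct (map u [1..<r] @ [v])"
      using j v by auto
    then show ?thesis
      by (simp add: wedge_coord_eq_0_if_not_distinct)
  next
    case False
    then have "wedge_in_tpow n k (map u ([1..<r] @ [j]))"
      using assms(2) j by (intro vanish) (auto simp: sorted_wrt_append)
    moreover have "card (insert i I0) = length (map u ([1..<r] @ [j]))"
      using assms(2,5-7) finite_subset by fastforce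
    moreover have "insert i I0 \<subseteq> {0..<n}"
      using assms(4,5) by simp
    ultimately show ?thesis
      unfolding wedge_in_tpow_def v by (metis map_append list.map)
  qed
qed

lemma comm_ring_hom_coeff_0: "comm_ring_hom (\<lambda>p :: 'a::comm_ring_1 poly. coeff p 0)"
  by unfold_locales (simp_all add: coeff_mult_0)

theorem theorem4p3:
  fixes u :: "nat \<Rightarrow> 'a::alg_closed_field poly vec"
    and n m r k :: nat
  assumes "2 \<le> r" and "r \<le> m" and "m \<le> n" and "1 \<le> k"
    and dim: "\<And>j. j \<in> {1..m} \<Longrightarrow> dim_vec (u j) = n"
    and deg: "\<And>j i. j \<in> {1..m} \<Longrightarrow> i < n \<Longrightarrow> degree (u j $ i) \<le> k - 1"
    and vanish: "\<And>js. sorted_wrt (<) js \<Longrightarrow> set js \<subseteq> {1..m} \<Longrightarrow> length js = r \<Longrightarrow>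
                   wedge_in_tpow n k (map u js)"
    and nondeg: "wedge_nonzero n (map (\<lambda>j. map_vec (\<lambda>p. coeff p 0) (u j)) [1..<r])"
  shows "\<forall>js. sorted_wrt (<) js \<and> set js \<subseteq> {1..m} \<and> length js = r + 1 \<longrightarrow>
           wedge_in_tpow n (2 * k) (map u js)"
proof (intro allI impI)
  fix js assume js: "sorted_wrt (<) js \<and> set js \<subseteq> {1..m} \<and> length js = r + 1"
  define us where "us = map u [1..<r]"
  obtain I0 where I0: "I0 \<subseteq> {0..<n}" "card I0 = length us"
    and nz: "wedge_coord (map (map_vec (\<lambda>p. coeff p 0)) us) I0 \<noteq> 0"
    using nondeg by (auto simp: wedge_nonzero_def us_def comp_def)
  have "\<And>v. v \<in> set us \<Longrightarrow> dim_vec v = n"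
    using dim assms(2) by (auto simp: us_def)
  then have D0: "poly (wedge_coord us I0) 0 \<noteq> 0"
    using nz wedge_coord_map_vec[OF comm_ring_hom_coeff_0 _ I0] by (simp add: poly_0_coeff_0)
  have bordered: "[:0, 1:] ^ k dvd wedge_coord (us @ [v]) (insert i I0)"
    if "v \<in> set (map u js)" and "i < n" and "i \<notin> I0" for v i
    unfolding us_def using that js I0 assms(1)
    by (intro bordered_wedge_coord_dvd[OF vanish]) (auto simp: us_def)
  have two: "length (map u js) - length us = 2"
    using js assms(1) by (simp add: us_def)
  show "wedge_in_tpow n (2 * k) (map u js)"
    unfolding wedge_in_tpow_def
  proof (intro allI impI)
    fix I assume I: "I \<subseteq> {0..<n} \<and> card I = length (map u js)"
    have "([:0, 1:] ^ k) ^ (length (map u js) - length us) dvd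
        wedge_coord us I0 ^ Suc (length (map u js)) * wedge_coord (map u js) I"
      using I0 I D0 bordered
      by (intro power_dvd_wedge_coord_if_bordered_dvd) (auto intro: finite_subset[of _ "{0..<n}"])
    then have "[:0, 1:] ^ (2 * k) dvd
        wedge_coord us I0 ^ Suc (length (map u js)) * wedge_coord (map u js) I"
      using two by (simp add: power_mult mult.commute[of 2])
    then show "[:0, 1:] ^ (2 * k) dvd wedge_coord (map u js) I"
      by (rule linear_power_dvd_mult_cancel) (simp add: D0 poly_power)
  qed
qed

end
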